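(* Fix $p\in(0,1]$ and let $(G_n)$ be a sequence of graphs with $\min_{u\in V}\delta_u=\omega(\log n)$. For each $n$ run the $(1,p,\mathcal B)$-Edge-Majority dynamics (equivalently the $(1,p,\mathcal B)$-Node-Majority dynamics) on $G_n$ from an arbitrary initial configuration $\mathbf X^{(0)}$. Then there exists $T=T(p)$ such that $\Pr(\tau\le T)=1-o(1)$.
   Context: $G_n=(V,E)$, $V=\{1,\dots,n\}$, $N(u)$ neighbourhood, $\delta_u=|N(u)|$, $\mathrm{vol}(S)=\sum_{v\in S}\delta_v$; asymptotics as $n\to\infty$. States in $\{\mathcal R,\mathcal B\}$; $B^{(t)}$ is the set of $\mathcal B$ nodes at round $t$, and $\tau=\inf\{t\ge0:\mathrm{vol}(B^{(t)})/\mathrm{vol}(V)>1/2\}$. $(1,p,\mathcal B)$-Edge-Majority: in each round $t\ge1$ every node $u$ independently picks one neighbour $v$ uniformly at random; with probability $p$ (independently) $u$ takes state $\mathcal B$, and otherwise it copies the state of $v$ at round $t-1$. *)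

theory Defs
  imports "HOL-Probability.Probability"
begin

text \<open>Graphs G_n on vertex set V = {1..n}, given by an adjacency predicate E.
  A configuration is a map nat => bool, True meaning state B, False meaning state R.\<close>

definition nbhd :: "(nat \<Rightarrow> nat \<Rightarrow> bool) \<Rightarrow> nat \<Rightarrow> nat \<Rightarrow> nat set" where
  "nbhd E n u = {v \<in> {1..n}. E u v}"

definition deg :: "(nat \<Rightarrow> nat \<Rightarrow> bool) \<Rightarrow> nat \<Rightarrow> nat \<Rightarrow> nat" where
  "deg E n u = card (nbhd E n u)"

definition vol :: "(nat \<Rightarrow> nat \<Rightarrow> bool) \<Rightarrow> nat \<Rightarrow> nat set \<Rightarrow> real" where
  "vol E n S = (\<Sum>v\<in>S. real (deg E n v))"

definition blue :: "nat \<Rightarrow> (nat \<Rightarrow> bool) \<Rightarrow> nat set" where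
  "blue n X = {u \<in> {1..n}. X u}"

definition em_step :: "real \<Rightarrow> (nat \<Rightarrow> nat \<Rightarrow> bool) \<Rightarrow> nat \<Rightarrow> (nat \<Rightarrow> bool) \<Rightarrow> (nat \<Rightarrow> bool) pmf" where
  "em_step p E n X = Pi_pmf {1..n} False
     (\<lambda>u. bind_pmf (bernoulli_pmf p)
        (\<lambda>c. if c then return_pmf True else map_pmf X (pmf_of_set (nbhd E n u))))"

text \<open>Distribution of the trajectory (X^(0), ..., X^(t)) after t rounds, encoded as a map
  from times to configurations (entries at times > t are irrelevant).\<close>
fun em_traj :: "real \<Rightarrow> (nat \<Rightarrow> nat \<Rightarrow> bool) \<Rightarrow> nat \<Rightarrow> (nat \<Rightarrow> bool) \<Rightarrow> nat \<Rightarrow> (nat \<Rightarrow> nat \<Rightarrow> bool) pmf" where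
  "em_traj p E n X0 0 = return_pmf (\<lambda>_. X0)"
| "em_traj p E n X0 (Suc t) = bind_pmf (em_traj p E n X0 t)
     (\<lambda>\<omega>. map_pmf (\<lambda>Y. fun_upd \<omega> (Suc t) Y) (em_step p E n (\<omega> t)))"

definition tau_le :: "(nat \<Rightarrow> nat \<Rightarrow> bool) \<Rightarrow> nat \<Rightarrow> nat \<Rightarrow> (nat \<Rightarrow> nat \<Rightarrow> bool) set" where
  "tau_le E n T = {\<omega>. \<exists>t\<le>T. vol E n (blue n (\<omega> t)) / vol E n {1..n} > 1/2}"

end

theory Submission
  imports Defs "HOL-Real_Asymp.Real_Asymp"
begin

(* In one round node u turns blue with probability p + (1 - p) * (blue fraction of N(u)), so by
   double counting the blue volume after the round has mean p vol(V) + (1 - p) vol(B).  It is a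
   sum of independent terms delta_u [u blue] in [0, delta_u]; as sum delta_u^2 <= n vol(V) and
   n delta_min <= vol(V), Hoeffding bounds a drop of eps vol(V) below the mean by
   exp(-2 eps^2 delta_min).  Iterating the mean recursion with a union bound over T rounds gives
   vol(B^(T)) >= (1 - (1 - p)^T - T eps) vol(V), which exceeds vol(V)/2 for suitable T and eps,
   except with probability T exp(-2 eps^2 ln n) -> 0 when delta_min >= ln n. *)

lemma finite_nbhd: "finite (nbhd E n u)"
  unfolding nbhd_def by simp

lemma deg_le: "deg E n u \<le> n"
proof -
  have "card (nbhd E n u) \<le> card {1..n}"
    by (rule card_mono) (auto simp: nbhd_def)
  then show ?thesis by (simp add: deg_def)
qed

lemma vol_nonneg: "0 \<le> vol E n S"
  unfolding vol_def by (simp add: sum_nonneg)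

lemma vol_blue_eq_sum:
  "vol E n (blue n Y) = (\<Sum>u\<in>{1..n}. if Y u then real (deg E n u) else 0)"
  unfolding vol_def blue_def by (rule sum.inter_filter) simp

lemma sum_card_blue_nbhd_eq_vol_blue:
  assumes sym: "\<And>u v. E u v = E v u"
  shows "(\<Sum>u\<in>{1..n}. real (card (nbhd E n u \<inter> {v. X v}))) = vol E n (blue n X)"
proof -
  have "(\<Sum>u\<in>{1..n}. real (card (nbhd E n u \<inter> {v. X v})))
      = (\<Sum>u\<in>{1..n}. \<Sum>v\<in>{1..n}. if E u v \<and> X v then 1 else 0)"
    by (intro sum.cong refl) (simp add: nbhd_def sum.If_cases Int_def conj_commute)
  also have "\<dots> = (\<Sum>v\<in>{1..n}. \<Sum>u\<in>{1..n}. if E u v \<and> X v then 1 else 0)"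
    by (rule sum.swap)
  also have "\<dots> = (\<Sum>v\<in>{1..n}. if X v then real (deg E n v) else 0)"
    by (intro sum.cong refl) (auto simp: deg_def nbhd_def sum.If_cases Int_def sym)
  also have "\<dots> = vol E n (blue n X)"
    by (rule vol_blue_eq_sum[symmetric])
  finally show ?thesis .
qed

lemma prob_em_step_vertex_blue:
  assumes p: "0 \<le> p" "p \<le> 1" and u: "u \<in> {1..n}" and ne: "nbhd E n u \<noteq> {}"
  shows "measure_pmf.prob (em_step p E n X) {Y. Y u}
       = p + (1 - p) * (card (nbhd E n u \<inter> {v. X v}) / deg E n u)"
proof -
  have copy_blue: "pmf (map_pmf X (pmf_of_set (nbhd E n u))) True
      = card (nbhd E n u \<inter> {v. X v}) / deg E n u"
    using finite_nbhd ne by (simp add: pmf_map measure_pmf_of_set vimage_def deg_def)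
  have "measure_pmf.prob (em_step p E n X) {Y. Y u}
      = measure_pmf.prob (map_pmf (\<lambda>Y. Y u) (em_step p E n X)) {True}"
    by (simp add: vimage_def)
  also have "map_pmf (\<lambda>Y. Y u) (em_step p E n X) = bind_pmf (bernoulli_pmf p)
        (\<lambda>c. if c then return_pmf True else map_pmf X (pmf_of_set (nbhd E n u)))"
    using u by (simp add: em_step_def Pi_pmf_component)
  also have "measure_pmf.prob \<dots> {True} = p + (1 - p) * (card (nbhd E n u \<inter> {v. X v}) / deg E n u)"
    using p copy_blue by (simp add: measure_pmf_single pmf_bind algebra_simps)
  finally show ?thesis .
qed

lemma sum_expectation_blue_volume_em_step:
  assumes sym: "\<And>u v. E u v = E v u" and p: "0 \<le> p" "p \<le> 1"
    and ne: "\<And>u. u \<in> {1..n} \<Longrightarrow> nbhd E n u \<noteq> {}"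
  shows "(\<Sum>u\<in>{1..n}. measure_pmf.expectation (em_step p E n X)
            (\<lambda>Y. if Y u then real (deg E n u) else 0))
       = p * vol E n {1..n} + (1 - p) * vol E n (blue n X)"
proof -
  have "measure_pmf.expectation (em_step p E n X) (\<lambda>Y. if Y u then real (deg E n u) else 0)
      = p * deg E n u + (1 - p) * card (nbhd E n u \<inter> {v. X v})"
    if u: "u \<in> {1..n}" for u
  proof -
    have deg_nonzero: "deg E n u \<noteq> 0"
      using ne[OF u] finite_nbhd by (simp add: deg_def)
    have expectation_eq: "measure_pmf.expectation (em_step p E n X) (\<lambda>Y. if Y u then real (deg E n u) else 0)
        = deg E n u * measure_pmf.prob (em_step p E n X) {Y. Y u}"
    proof -
      have "(\<lambda>Y. if Y u then real (deg E n u) else 0) = (\<lambda>Y. deg E n u * (indicator {Y. Y u} Y :: real))"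
        by (simp add: fun_eq_iff)
      then show ?thesis by simp
    qed
    show ?thesis
      using deg_nonzero
      by (simp only: expectation_eq prob_em_step_vertex_blue[OF p u ne[OF u]]) (simp add: field_simps)
  qed
  then have "(\<Sum>u\<in>{1..n}. measure_pmf.expectation (em_step p E n X)
            (\<lambda>Y. if Y u then real (deg E n u) else 0))
      = p * (\<Sum>u\<in>{1..n}. real (deg E n u)) + (1 - p) * (\<Sum>u\<in>{1..n}. real (card (nbhd E n u \<inter> {v. X v})))"
    by (simp add: sum.distrib sum_distrib_left)
  then show ?thesis
    by (simp only: sum_card_blue_nbhd_eq_vol_blue[OF sym] vol_def[of E n "{1..n}"])
qed

lemma indep_vars_em_step:
  "prob_space.indep_vars (measure_pmf (em_step p E n X)) (\<lambda>_. borel) (\<lambda>u Y. f u (Y u)) {1..n}"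
proof -
  have "prob_space.indep_vars (measure_pmf (em_step p E n X)) (\<lambda>_. count_space UNIV) (\<lambda>u Y. Y u) {1..n}"
    unfolding em_step_def by (rule indep_vars_Pi_pmf) simp
  then show ?thesis
    by (rule prob_space.indep_vars_compose2[OF measure_pmf.prob_space_axioms]) simp
qed

lemma min_mult_sum_squares_le_square_sum:
  fixes d :: "'a \<Rightarrow> real"
  assumes "finite I" and "0 \<le> m" and "\<And>i. i \<in> I \<Longrightarrow> m \<le> d i" and "\<And>i. i \<in> I \<Longrightarrow> d i \<le> card I"
  shows "m * (\<Sum>i\<in>I. (d i)\<^sup>2) \<le> (\<Sum>i\<in>I. d i)\<^sup>2"
proof -
  have d_nonneg: "0 \<le> d i" if "i \<in> I" for i
    using assms(2) assms(3)[OF that] by linarith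
  have "(\<Sum>i\<in>I. (d i)\<^sup>2) \<le> (\<Sum>i\<in>I. card I * d i)"
    using assms(4) d_nonneg by (intro sum_mono) (simp add: power2_eq_square mult_right_mono)
  also have "\<dots> = card I * (\<Sum>i\<in>I. d i)"
    by (simp add: sum_distrib_left)
  finally have "m * (\<Sum>i\<in>I. (d i)\<^sup>2) \<le> (m * card I) * (\<Sum>i\<in>I. d i)"
    using assms(2) by (simp add: mult_left_mono mult.assoc)
  also have "\<dots> \<le> (\<Sum>i\<in>I. d i) * (\<Sum>i\<in>I. d i)"
    using assms(3) d_nonneg sum_bounded_below[of I m d]
    by (intro mult_right_mono sum_nonneg) (auto simp: mult.commute)
  finally show ?thesis by (simp add: power2_eq_square)
qed

lemma prob_em_step_blue_volume_deficit:
  assumes sym: "\<And>u v. E u v = E v u" and p: "0 \<le> p" "p \<le> 1" and m: "0 < m"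
    and deg: "\<And>u. u \<in> {1..n} \<Longrightarrow> m \<le> real (deg E n u)" and n: "1 \<le> n" and \<epsilon>: "0 \<le> \<epsilon>"
  shows "measure_pmf.prob (em_step p E n X)
      {Y. vol E n (blue n Y) \<le> p * vol E n {1..n} + (1 - p) * vol E n (blue n X) - \<epsilon> * vol E n {1..n}}
    \<le> exp (-2 * \<epsilon>\<^sup>2 * m)"
proof -
  define D where "D = vol E n {1..n}"
  define d where "d u = real (deg E n u)" for u
  define S where "S = (\<Sum>u\<in>{1..n}. (d u - 0)\<^sup>2)"
  have d_pos: "0 < d u" if "u \<in> {1..n}" for u
    using deg[OF that] m by (simp add: d_def)
  have ne: "nbhd E n u \<noteq> {}" if "u \<in> {1..n}" for u
    using d_pos[OF that] by (auto simp: d_def deg_def)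
  define \<mu> where
    "\<mu> = (\<Sum>u\<in>{1..n}. measure_pmf.expectation (em_step p E n X) (\<lambda>Y. if Y u then d u else 0))"
  have \<mu>_eq: "\<mu> = p * D + (1 - p) * vol E n (blue n X)"
    unfolding \<mu>_def D_def d_def by (rule sum_expectation_blue_volume_em_step[OF sym p ne])
  interpret Hoeffding_ineq "measure_pmf (em_step p E n X)" "{1..n}" "\<lambda>u Y. if Y u then d u else 0"
    "\<lambda>_. 0" d \<mu>
  proof unfold_locales
    show "prob_space.indep_vars (measure_pmf (em_step p E n X)) (\<lambda>_. borel)
        (\<lambda>u Y. if Y u then d u else 0) {1..n}"
      by (rule indep_vars_em_step)
    show "AE Y in measure_pmf (em_step p E n X). (if Y u then d u else 0) \<in> {0..d u}"
      if "u \<in> {1..n}" for u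
      using d_pos[OF that] by simp
  qed (simp_all add: \<mu>_def)
  have S_pos: "0 < S"
    unfolding S_def using n d_pos by (intro sum_pos) force+
  have "m * S \<le> D\<^sup>2"
    unfolding S_def D_def vol_def d_def diff_zero
    using m deg deg_le by (intro min_mult_sum_squares_le_square_sum) auto
  then have exponent_le: "2 * \<epsilon>\<^sup>2 * m \<le> 2 * (\<epsilon> * D)\<^sup>2 / S"
    using S_pos mult_left_mono[of "m * S" "D\<^sup>2" "2 * \<epsilon>\<^sup>2"]
    by (simp add: field_simps)
  have "measure_pmf.prob (em_step p E n X)
      {Y. vol E n (blue n Y) \<le> p * D + (1 - p) * vol E n (blue n X) - \<epsilon> * D}
    = measure_pmf.prob (em_step p E n X) {Y \<in> space (measure_pmf (em_step p E n X)).
        (\<Sum>u\<in>{1..n}. if Y u then d u else 0) \<le> \<mu> - \<epsilon> * D}"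
    unfolding d_def by (simp add: \<mu>_eq vol_blue_eq_sum)
  also have "\<dots> \<le> exp (-2 * (\<epsilon> * D)\<^sup>2 / S)"
    unfolding S_def using \<epsilon> S_pos vol_nonneg[of E n "{1..n}"]
    by (intro Hoeffding_ineq_le) (auto simp: S_def D_def)
  also have "\<dots> \<le> exp (-2 * \<epsilon>\<^sup>2 * m)"
    using exponent_le by simp
  finally show ?thesis
    by (simp add: D_def)
qed

lemma measure_bind_pmf_le_add:
  fixes M :: "'a pmf" and f :: "'a \<Rightarrow> 'b pmf"
  assumes bad: "measure_pmf.prob M {x. \<not> P x} \<le> a" and "0 \<le> q"
    and good: "\<And>x. x \<in> set_pmf M \<Longrightarrow> P x \<Longrightarrow> measure_pmf.prob (f x) B \<le> q"
  shows "measure_pmf.prob (bind_pmf M f) B \<le> a + q"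
proof -
  have "measure_pmf.prob (bind_pmf M f) B = measure_pmf.expectation M (\<lambda>x. measure_pmf.prob (f x) B)"
    unfolding measure_pmf_bind
    by (rule measure_pmf.measure_bind[where N="count_space UNIV"]) (auto simp: measure_pmf_in_subprob_space)
  also have "\<dots> \<le> measure_pmf.expectation M (\<lambda>x. indicator {x. \<not> P x} x + q)"
  proof (rule integral_mono_AE)
    show "integrable (measure_pmf M) (\<lambda>x. measure_pmf.prob (f x) B)"
      by (rule measure_pmf.integrable_const_bound[where B=1]) auto
    show "integrable (measure_pmf M) (\<lambda>x. indicator {x. \<not> P x} x + q)"
      by (rule measure_pmf.integrable_const_bound[where B="1 + \<bar>q\<bar>"]) (auto simp: indicator_def)
    show "AE x in measure_pmf M. measure_pmf.prob (f x) B \<le> indicator {x. \<not> P x} x + q"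
      using good \<open>0 \<le> q\<close>
      by (intro AE_pmfI) (auto simp: indicator_def intro: order.trans[OF measure_pmf.prob_le_1])
  qed
  also have "\<dots> = measure_pmf.prob M {x. \<not> P x} + q"
    by (subst Bochner_Integration.integral_add) (auto intro!: measure_pmf.integrable_const_bound[where B=1])
  finally show ?thesis
    using bad by simp
qed

lemma prob_em_traj_blue_volume_low:
  assumes sym: "\<And>u v. E u v = E v u" and p: "0 \<le> p" "p \<le> 1" and m: "0 < m"
    and deg: "\<And>u. u \<in> {1..n} \<Longrightarrow> m \<le> real (deg E n u)" and n: "1 \<le> n" and \<epsilon>: "0 \<le> \<epsilon>"
  shows "measure_pmf.prob (em_traj p E n X0 t)
      {\<omega>. vol E n (blue n (\<omega> t)) < (1 - (1 - p) ^ t - real t * \<epsilon>) * vol E n {1..n}}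
    \<le> real t * exp (-2 * \<epsilon>\<^sup>2 * m)"
proof (induction t)
  case 0
  show ?case
    by (simp add: vol_nonneg not_less)
next
  case (Suc t)
  define D where "D = vol E n {1..n}"
  define L where "L s = (1 - (1 - p) ^ s - real s * \<epsilon>) * D" for s
  let ?e = "exp (-2 * \<epsilon>\<^sup>2 * m)"
  have L_Suc: "L (Suc t) \<le> p * D + (1 - p) * v - \<epsilon> * D" if "L t \<le> v" for v
  proof -
    have "(1 - p) * L t \<le> (1 - p) * v"
      using that p by (intro mult_left_mono) auto
    moreover have "0 \<le> p * (real t * \<epsilon> * D)"
      using p \<epsilon> vol_nonneg[of E n "{1..n}"] by (simp add: D_def)
    ultimately show ?thesis
      by (simp add: L_def algebra_simps)
  qed
  have "measure_pmf.prob (em_traj p E n X0 (Suc t)) {\<omega>. vol E n (blue n (\<omega> (Suc t))) < L (Suc t)}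
      \<le> real t * ?e + ?e"
    unfolding em_traj.simps
  proof (rule measure_bind_pmf_le_add[where P = "\<lambda>\<omega>. L t \<le> vol E n (blue n (\<omega> t))"])
    show "measure_pmf.prob (em_traj p E n X0 t) {\<omega>. \<not> L t \<le> vol E n (blue n (\<omega> t))} \<le> real t * ?e"
      using Suc.IH by (simp add: L_def D_def not_le)
    fix \<omega> assume "L t \<le> vol E n (blue n (\<omega> t))"
    then have "{Y. vol E n (blue n Y) < L (Suc t)}
        \<subseteq> {Y. vol E n (blue n Y) \<le> p * D + (1 - p) * vol E n (blue n (\<omega> t)) - \<epsilon> * D}"
      by (auto dest: L_Suc)
    then have "measure_pmf.prob (em_step p E n (\<omega> t)) {Y. vol E n (blue n Y) < L (Suc t)}
        \<le> measure_pmf.prob (em_step p E n (\<omega> t))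
            {Y. vol E n (blue n Y) \<le> p * D + (1 - p) * vol E n (blue n (\<omega> t)) - \<epsilon> * D}"
      by (rule measure_pmf.finite_measure_mono) simp
    also have "\<dots> \<le> ?e"
      unfolding D_def by (rule prob_em_step_blue_volume_deficit[OF sym p m deg n \<epsilon>])
    finally show "measure_pmf.prob (map_pmf (\<lambda>Y. fun_upd \<omega> (Suc t) Y) (em_step p E n (\<omega> t)))
        {\<omega>'. vol E n (blue n (\<omega>' (Suc t))) < L (Suc t)} \<le> ?e"
      by (simp add: vimage_def)
  qed simp
  then show ?case
    by (simp add: L_def D_def algebra_simps)
qed

lemma prob_em_traj_tau_le_lower:
  assumes sym: "\<And>u v. E u v = E v u" and p: "0 \<le> p" "p \<le> 1" and m: "0 < m"
    and deg: "\<And>u. u \<in> {1..n} \<Longrightarrow> m \<le> real (deg E n u)" and n: "1 \<le> n" and \<epsilon>: "0 \<le> \<epsilon>"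
    and margin: "(1 - p) ^ T + real T * \<epsilon> < 1 / 2"
  shows "1 - real T * exp (-2 * \<epsilon>\<^sup>2 * m) \<le> measure_pmf.prob (em_traj p E n X0 T) (tau_le E n T)"
proof -
  define D where "D = vol E n {1..n}"
  define bad where "bad = {\<omega>. vol E n (blue n (\<omega> T)) < (1 - (1 - p) ^ T - real T * \<epsilon>) * D}"
  have "0 < real (deg E n 1)"
    using deg[of 1] m n by simp
  also have "\<dots> \<le> D"
    unfolding D_def vol_def using n by (intro member_le_sum) auto
  finally have D_pos: "0 < D" .
  have "- bad \<subseteq> tau_le E n T"
  proof
    fix \<omega> assume "\<omega> \<in> - bad"
    then have "(1 - (1 - p) ^ T - real T * \<epsilon>) * D \<le> vol E n (blue n (\<omega> T))"
      by (simp add: bad_def)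
    moreover have "1 / 2 * D < (1 - (1 - p) ^ T - real T * \<epsilon>) * D"
      using margin D_pos by (intro mult_strict_right_mono) auto
    ultimately show "\<omega> \<in> tau_le E n T"
      using D_pos unfolding tau_le_def D_def by (auto simp: field_simps)
  qed
  then have "1 - measure_pmf.prob (em_traj p E n X0 T) bad
      \<le> measure_pmf.prob (em_traj p E n X0 T) (tau_le E n T)"
    using measure_pmf.prob_compl[of bad] measure_pmf.finite_measure_mono[of "- bad"]
    by (simp add: Compl_eq_Diff_UNIV)
  moreover have "measure_pmf.prob (em_traj p E n X0 T) bad \<le> real T * exp (-2 * \<epsilon>\<^sup>2 * m)"
    unfolding bad_def D_def by (rule prob_em_traj_blue_volume_low[OF sym p m deg n \<epsilon>])
  ultimately show ?thesis
    by linarith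
qed

lemma eventually_prob_em_traj_tau_le_lower:
  assumes sym: "\<forall>n u v. G n u v = G n v u" and p: "0 \<le> p" "p \<le> 1" and \<epsilon>: "0 \<le> \<epsilon>"
    and margin: "(1 - p) ^ T + real T * \<epsilon> < 1 / 2"
    and deg: "eventually (\<lambda>n. \<forall>u\<in>{1..n}. ln (real n) \<le> real (deg (G n) n u)) sequentially"
  shows "eventually (\<lambda>n. 1 - real T * exp (-2 * \<epsilon>\<^sup>2 * ln (real n))
      \<le> measure_pmf.prob (em_traj p (G n) n (X0 n) T) (tau_le (G n) n T)) sequentially"
  using deg eventually_ge_at_top[of 2]
proof eventually_elim
  case (elim n)
  have sym_n: "\<And>u v. G n u v = G n v u"
    using sym by simp
  have deg_n: "\<And>u. u \<in> {1..n} \<Longrightarrow> ln (real n) \<le> real (deg (G n) n u)"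
    using elim(1) by simp
  have ln_pos: "0 < ln (real n)" and n_pos: "1 \<le> n"
    using elim(2) by simp_all
  show ?case
    by (rule prob_em_traj_tau_le_lower[OF sym_n p ln_pos deg_n n_pos \<epsilon> margin])
qed

theorem proposition6p1:
  fixes p :: real
  assumes "0 < p" and "p \<le> 1"
  shows "\<exists>T::nat. \<forall>(G :: nat \<Rightarrow> nat \<Rightarrow> nat \<Rightarrow> bool) (X0 :: nat \<Rightarrow> nat \<Rightarrow> bool).
     (\<forall>n u v. G n u v = G n v u) \<longrightarrow>
     (\<forall>n u. \<not> G n u u) \<longrightarrow>
     (\<forall>C>0. eventually (\<lambda>n. \<forall>u\<in>{1..n}. real (deg (G n) n u) \<ge> C * ln (real n)) sequentially) \<longrightarrow>
     (\<lambda>n. measure_pmf.prob (em_traj p (G n) n (X0 n) T) (tau_le (G n) n T))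
       \<longlonglongrightarrow> 1"
proof -
  obtain T :: nat where T: "(1 - p) ^ T < 1 / 4"
    using real_arch_pow_inv[of "1 / 4" "1 - p"] assms by auto
  define \<epsilon> :: real where "\<epsilon> = 1 / (8 * (real T + 1))"
  have \<epsilon>: "0 < \<epsilon>" and "real T * \<epsilon> \<le> 1 / 8"
    by (simp_all add: \<epsilon>_def field_simps)
  with T have margin: "(1 - p) ^ T + real T * \<epsilon> < 1 / 2"
    by linarith
  show ?thesis
  proof (intro exI allI impI)
    fix G :: "nat \<Rightarrow> nat \<Rightarrow> nat \<Rightarrow> bool" and X0 :: "nat \<Rightarrow> nat \<Rightarrow> bool"
    assume sym: "\<forall>n u v. G n u v = G n v u"
      and deg: "\<forall>C>0. eventually (\<lambda>n. \<forall>u\<in>{1..n}. real (deg (G n) n u) \<ge> C * ln (real n)) sequentially"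
    let ?P = "\<lambda>n. measure_pmf.prob (em_traj p (G n) n (X0 n) T) (tau_le (G n) n T)"
    have "eventually (\<lambda>n. 1 - real T * exp (-2 * \<epsilon>\<^sup>2 * ln (real n)) \<le> ?P n) sequentially"
      using deg[rule_format, OF zero_less_one] assms \<epsilon> margin sym
      by (intro eventually_prob_em_traj_tau_le_lower) simp_all
    moreover have "eventually (\<lambda>n. ?P n \<le> 1) sequentially"
      by simp
    moreover have "(\<lambda>n. 1 - real T * exp (-2 * \<epsilon>\<^sup>2 * ln (real n))) \<longlonglongrightarrow> 1"
      using \<epsilon> by real_asymp
    ultimately show "?P \<longlonglongrightarrow> 1"
      using tendsto_const by (rule tendsto_sandwich)
  qed
qed

end
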